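(* For every integer $k\geq 2$ and every graph $G$ containing at most one cycle, $\nu_{k}(G) \geq \left \lfloor \frac{\nu_{k-1}(G) + \nu_{k+1}(G)}{2} \right \rfloor$.
   Context: Graphs are finite, without loops, possibly with multiple edges. For $k\geq 1$, $\nu_k(G)$ is the maximum number of edges of a $k$-edge-colorable subgraph of $G$. *)

theory Defs
  imports Main
begin

text \<open>A finite loopless multigraph: finite vertex set V, finite edge set E (edge
identifiers, so parallel edges are allowed), and each edge e has a set ends e of
exactly two distinct endpoints in V.\<close>

definition multigraph :: "'v set \<Rightarrow> 'e set \<Rightarrow> ('e \<Rightarrow> 'v set) \<Rightarrow> bool" where
  "multigraph V E ends \<longleftrightarrow> finite V \<and> finite E \<and>
     (\<forall>e\<in>E. ends e \<subseteq> V \<and> card (ends e) = 2)"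

definition edge_colorable :: "('e \<Rightarrow> 'v set) \<Rightarrow> nat \<Rightarrow> 'e set \<Rightarrow> bool" where
  "edge_colorable ends k F \<longleftrightarrow> (\<exists>c :: 'e \<Rightarrow> nat.
     (\<forall>e\<in>F. c e < k) \<and>
     (\<forall>e\<in>F. \<forall>e'\<in>F. e \<noteq> e' \<and> ends e \<inter> ends e' \<noteq> {} \<longrightarrow> c e \<noteq> c e'))"

definition nu :: "'e set \<Rightarrow> ('e \<Rightarrow> 'v set) \<Rightarrow> nat \<Rightarrow> nat" where
  "nu E ends k = Max {card F | F. F \<subseteq> E \<and> edge_colorable ends k F}"

text \<open>A cycle (as an edge set): nonempty, connected, every vertex has degree 0 or 2
in it. Two parallel edges form a cycle of length 2.\<close>

definition edge_connected_set :: "('e \<Rightarrow> 'v set) \<Rightarrow> 'e set \<Rightarrow> bool" where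
  "edge_connected_set ends C \<longleftrightarrow>
     (\<forall>D. D \<subseteq> C \<and> D \<noteq> {} \<and> D \<noteq> C \<longrightarrow>
        (\<exists>e\<in>D. \<exists>e'\<in>C - D. ends e \<inter> ends e' \<noteq> {}))"

definition is_cycle :: "'e set \<Rightarrow> ('e \<Rightarrow> 'v set) \<Rightarrow> 'e set \<Rightarrow> bool" where
  "is_cycle E ends C \<longleftrightarrow> C \<subseteq> E \<and> C \<noteq> {} \<and> edge_connected_set ends C \<and>
     (\<forall>v. card {e\<in>C. v \<in> ends e} = 0 \<or> card {e\<in>C. v \<in> ends e} = 2)"

definition at_most_one_cycle :: "'e set \<Rightarrow> ('e \<Rightarrow> 'v set) \<Rightarrow> bool" where
  "at_most_one_cycle E ends \<longleftrightarrow>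
     (\<forall>C1 C2. is_cycle E ends C1 \<and> is_cycle E ends C2 \<longrightarrow> C1 = C2)"

end

theory Submission
  imports Defs
begin

text \<open>Let \<open>F\<close> be a maximum \<open>(k - 1)\<close>-edge-colourable and \<open>H\<close> a maximum
\<open>(k + 1)\<close>-edge-colourable edge set, \<open>I = F \<inter> H\<close> and \<open>T\<close> their symmetric difference.
Then \<open>|F| + |H| = 2|I| + |T|\<close>, and \<open>2 deg I + deg T \<le> 2k\<close> at every vertex.
Deleting one edge of the unique cycle, if that cycle is not contained in \<open>I\<close>, leaves a forest
\<open>T0 \<subseteq> T\<close> with at most one edge fewer such that every cycle of \<open>I \<union> T0\<close> lies in \<open>I\<close>.
A forest splits into two halves whose degrees are at most half the forest degree, rounded up
(peel off a leaf and put its edge into the half that is lighter at the other endpoint); the larger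
half \<open>P\<close> has at least \<open>|T| div 2\<close> edges and \<open>I \<union> P\<close> has maximum degree \<open>k\<close>.
Finally, a graph of maximum degree \<open>k\<close> whose only possible cycle is already \<open>k\<close>-coloured
(here by the colouring of \<open>F\<close>) is \<open>k\<close>-edge-colourable: the remaining edges can be stripped off
as pendant edges, and colouring them back in reverse order never meets more than \<open>k - 1\<close>
coloured neighbours. Hence \<open>\<nu>\<^sub>k \<ge> |I| + |T| div 2\<close>.\<close>

lemma card_add_eq_card_Int_symdiff:
  assumes "finite A" "finite B"
  shows "card A + card B = 2 * card (A \<inter> B) + card (sym_diff A B)"
proof -
  have "card A = card (A \<inter> B) + card (A - B)" "card B = card (A \<inter> B) + card (B - A)"
    using card_Int_Diff[OF assms(1), of B] card_Int_Diff[OF assms(2), of A] by (simp_all add: Int_commute)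
  moreover have "card (sym_diff A B) = card (A - B) + card (B - A)"
    using assms by (intro card_Un_disjoint) auto
  ultimately show ?thesis by simp
qed

lemma edge_colorable_mono:
  assumes "edge_colorable ends k X" "Y \<subseteq> X" "k \<le> k'"
  shows "edge_colorable ends k' Y"
proof -
  obtain c :: "_ \<Rightarrow> nat" where "\<forall>e\<in>X. c e < k"
    "\<forall>e\<in>X. \<forall>e'\<in>X. e \<noteq> e' \<and> ends e \<inter> ends e' \<noteq> {} \<longrightarrow> c e \<noteq> c e'"
    using assms(1) unfolding edge_colorable_def by blast
  then show ?thesis
    unfolding edge_colorable_def using assms(2,3) by (metis order_less_le_trans subsetD)
qed

locale finite_multigraph =
  fixes V :: "'v set" and E :: "'e set" and ends :: "'e \<Rightarrow> 'v set"
  assumes multigraph: "multigraph V E ends"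
begin

definition deg :: "'e set \<Rightarrow> 'v \<Rightarrow> nat" where
  "deg X v = card {e\<in>X. v \<in> ends e}"

definition verts :: "'e set \<Rightarrow> 'v set" where
  "verts X = \<Union>(ends ` X)"

definition leafless :: "'e set \<Rightarrow> bool" where
  "leafless X \<longleftrightarrow> (\<forall>v. deg X v \<noteq> 1)"

definition cycle_free :: "'e set \<Rightarrow> bool" where
  "cycle_free X \<longleftrightarrow> (\<nexists>C. C \<subseteq> X \<and> is_cycle E ends C)"

lemma finite_edges: "finite E"
  using multigraph by (simp add: multigraph_def)

lemma card_ends: "e \<in> E \<Longrightarrow> card (ends e) = 2"
  using multigraph by (simp add: multigraph_def)

lemma finite_ends: "e \<in> E \<Longrightarrow> finite (ends e)"
  using card_ends by (metis card.infinite zero_neq_numeral)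

lemma finite_if_subset_edges: "X \<subseteq> E \<Longrightarrow> finite X"
  using finite_edges finite_subset by blast

lemma finite_verts: "X \<subseteq> E \<Longrightarrow> finite (verts X)"
  unfolding verts_def using finite_if_subset_edges finite_ends by blast

lemma other_end:
  assumes "e \<in> E" "w \<in> ends e"
  obtains z where "ends e = {w, z}" "z \<noteq> w"
proof -
  have "card (ends e - {w}) = 1"
    using card_ends[OF assms(1)] assms(2) finite_ends[OF assms(1)] by simp
  then obtain z where "ends e - {w} = {z}" by (auto simp: card_1_singleton_iff)
  then show ?thesis using that assms(2) by blast
qed

lemma handshake:
  assumes "X \<subseteq> E"
  shows "(\<Sum>v\<in>verts X. deg X v) = 2 * card X"
proof -
  have "(\<Sum>v\<in>verts X. deg X v) = (\<Sum>v\<in>verts X. \<Sum>e\<in>X. if v \<in> ends e then 1 else 0)"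
    unfolding deg_def using finite_if_subset_edges[OF assms] by (simp add: sum.If_cases Int_def)
  also have "\<dots> = (\<Sum>e\<in>X. \<Sum>v\<in>verts X. if v \<in> ends e then 1 else 0)"
    by (rule sum.swap)
  also have "\<dots> = (\<Sum>e\<in>X. card (ends e))"
  proof (rule sum.cong[OF refl])
    fix e assume "e \<in> X"
    then have "verts X \<inter> {v. v \<in> ends e} = ends e" unfolding verts_def by auto
    then show "(\<Sum>v\<in>verts X. if v \<in> ends e then 1 else 0) = card (ends e)"
      using finite_verts[OF assms] by (simp add: sum.If_cases)
  qed
  also have "\<dots> = (\<Sum>e\<in>X. 2)"
    using assms card_ends by (intro sum.cong) auto
  finally show ?thesis by simp
qed

lemma deg_mono: "X \<subseteq> E \<Longrightarrow> Y \<subseteq> X \<Longrightarrow> deg Y v \<le> deg X v"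
  unfolding deg_def by (rule card_mono) (auto intro: finite_if_subset_edges)

lemma deg_ge_1: "X \<subseteq> E \<Longrightarrow> e \<in> X \<Longrightarrow> v \<in> ends e \<Longrightarrow> 1 \<le> deg X v"
  unfolding deg_def using finite_if_subset_edges
  by (metis (no_types, lifting) One_nat_def Suc_leI card_gt_0_iff empty_iff finite_subset mem_Collect_eq subsetI)

lemma deg_eq_0: "v \<notin> verts X \<Longrightarrow> deg X v = 0"
  unfolding deg_def verts_def by (metis (no_types, lifting) UN_I card.empty empty_Collect_eq)

lemma deg_eq_1E:
  assumes "deg X w = 1"
  obtains e where "e \<in> X" "w \<in> ends e" "\<And>e'. e' \<in> X \<Longrightarrow> w \<in> ends e' \<Longrightarrow> e' = e"
  using assms unfolding deg_def by (auto simp: card_1_singleton_iff)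

lemma deg_Un_disjoint:
  assumes "A \<subseteq> E" "B \<subseteq> E" "A \<inter> B = {}"
  shows "deg (A \<union> B) v = deg A v + deg B v"
proof -
  have "{e\<in>A \<union> B. v \<in> ends e} = {e\<in>A. v \<in> ends e} \<union> {e\<in>B. v \<in> ends e}" by blast
  then show ?thesis
    unfolding deg_def using assms finite_if_subset_edges by (simp add: card_Un_disjoint disjoint_iff)
qed

lemma deg_split:
  assumes "T \<subseteq> E" "A \<subseteq> T"
  shows "deg T v = deg A v + deg (T - A) v"
proof -
  have "T = A \<union> (T - A)" using assms(2) by blast
  then show ?thesis using deg_Un_disjoint[of A "T - A" v] assms by auto
qed

lemma deg_insert:
  "X \<subseteq> E \<Longrightarrow> e \<notin> X \<Longrightarrow> deg (insert e X) v = deg X v + (if v \<in> ends e then 1 else 0)"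
proof -
  assume "X \<subseteq> E" "e \<notin> X"
  moreover have "{e'\<in>insert e X. v \<in> ends e'} =
      (if v \<in> ends e then insert e {e'\<in>X. v \<in> ends e'} else {e'\<in>X. v \<in> ends e'})"
    by auto
  ultimately show ?thesis
    unfolding deg_def using finite_if_subset_edges by simp
qed

lemma deg_add_eq_deg_Int_symdiff:
  assumes "F \<subseteq> E" "H \<subseteq> E"
  shows "deg F v + deg H v = 2 * deg (F \<inter> H) v + deg (sym_diff F H) v"
proof -
  let ?at = "\<lambda>X. {e\<in>X. v \<in> ends e}"
  have "?at (F \<inter> H) = ?at F \<inter> ?at H" "?at (sym_diff F H) = sym_diff (?at F) (?at H)"
    by blast+
  moreover have "finite (?at F)" "finite (?at H)"
    using assms finite_if_subset_edges by simp_all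
  ultimately show ?thesis
    unfolding deg_def by (simp add: card_add_eq_card_Int_symdiff)
qed

subsection \<open>Leafless edge sets and cycles\<close>

text \<open>Having no nonempty leafless subset characterises forests; this is \<open>|E| < |V|\<close> for them.\<close>

lemma card_lt_card_verts_if_no_leafless:
  assumes "D \<subseteq> E" "D \<noteq> {}" "\<And>Z. Z \<subseteq> D \<Longrightarrow> Z \<noteq> {} \<Longrightarrow> \<not> leafless Z"
  shows "card D < card (verts D)"
  using assms
proof (induction "card D" arbitrary: D rule: less_induct)
  case less
  obtain w where w: "deg D w = 1" using less.prems(3)[of D] less.prems(2) unfolding leafless_def by blast
  obtain e where e: "e \<in> D" "w \<in> ends e" "\<And>e'. e' \<in> D \<Longrightarrow> w \<in> ends e' \<Longrightarrow> e' = e"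
    using deg_eq_1E[OF w] by metis
  have fin: "finite D" "finite (verts D)"
    using less.prems(1) finite_if_subset_edges finite_verts by auto
  show ?case
  proof (cases "D = {e}")
    case True
    then show ?thesis using card_ends[of e] less.prems(1) unfolding verts_def by simp
  next
    case False
    have "card (D - {e}) < card (verts (D - {e}))"
    proof (rule less.hyps)
      show "card (D - {e}) < card D" using card_Diff1_less[OF fin(1) e(1)] .
      show "D - {e} \<subseteq> E" "D - {e} \<noteq> {}" using less.prems(1) False e(1) by auto
      show "\<not> leafless Z" if "Z \<subseteq> D - {e}" "Z \<noteq> {}" for Z
        using less.prems(3) that by blast
    qed
    moreover have "verts (D - {e}) \<subseteq> verts D - {w}"
      using e unfolding verts_def by blast
    then have "card (verts (D - {e})) \<le> card (verts D - {w})"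
      using fin(2) by (intro card_mono) auto
    moreover have "w \<in> verts D" unfolding verts_def using e by auto
    then have "card (verts D - {w}) = card (verts D) - 1" by simp
    moreover have "card (D - {e}) = card D - 1" using e(1) by simp
    moreover have "card D \<ge> 1" using fin(1) e(1) card_0_eq by fastforce
    ultimately show ?thesis by linarith
  qed
qed

lemma card_le_card_verts:
  assumes "D \<subseteq> E" "e \<in> D" "\<And>Z. Z \<subseteq> D - {e} \<Longrightarrow> Z \<noteq> {} \<Longrightarrow> \<not> leafless Z"
  shows "card D \<le> card (verts D)"
proof (cases "D = {e}")
  case True
  then show ?thesis using card_ends[of e] assms(1) unfolding verts_def by simp
next
  case False
  have fin: "finite D" "finite (verts D)"
    using assms(1) finite_if_subset_edges finite_verts by auto
  have "card (D - {e}) < card (verts (D - {e}))"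
    using assms False by (intro card_lt_card_verts_if_no_leafless) auto
  moreover have "card (verts (D - {e})) \<le> card (verts D)"
    using fin(2) unfolding verts_def by (intro card_mono) auto
  moreover have "card (D - {e}) = card D - 1" using assms(2) by simp
  moreover have "card D \<ge> 1" using fin(1) assms(2) card_0_eq by fastforce
  ultimately show ?thesis by linarith
qed

lemma deg_0_or_2_if_leafless:
  assumes "X \<subseteq> E" "leafless X" "card X \<le> card (verts X)"
  shows "deg X v = 0 \<or> deg X v = 2"
proof (rule ccontr)
  assume v: "\<not> (deg X v = 0 \<or> deg X v = 2)"
  then have "v \<in> verts X" using deg_eq_0 by blast
  have ge2: "2 \<le> deg X u" if u: "u \<in> verts X" for u
  proof -
    obtain e where "e \<in> X" "u \<in> ends e" using u unfolding verts_def by blast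
    then have "1 \<le> deg X u" using deg_ge_1 assms(1) by blast
    then show ?thesis using assms(2) unfolding leafless_def by (metis le_antisym not_less_eq_eq numeral_2_eq_2 One_nat_def)
  qed
  have "(\<Sum>u\<in>verts X. 2) < (\<Sum>u\<in>verts X. deg X u)"
  proof (rule sum_strict_mono_ex1)
    show "finite (verts X)" using finite_verts[OF assms(1)] .
    show "\<forall>u\<in>verts X. 2 \<le> deg X u" using ge2 by blast
    show "\<exists>u\<in>verts X. 2 < deg X u" using \<open>v \<in> verts X\<close> ge2[of v] v by force
  qed
  then show False using handshake[OF assms(1)] assms(3) by simp
qed

lemma edge_connected_if_minimal_leafless:
  assumes "leafless D" and minimal: "\<And>D'. D' \<subset> D \<Longrightarrow> D' \<noteq> {} \<Longrightarrow> \<not> leafless D'"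
  shows "edge_connected_set ends D"
  unfolding edge_connected_set_def
proof (intro allI impI)
  fix D1 assume D1: "D1 \<subseteq> D \<and> D1 \<noteq> {} \<and> D1 \<noteq> D"
  show "\<exists>e\<in>D1. \<exists>e'\<in>D - D1. ends e \<inter> ends e' \<noteq> {}"
  proof (rule ccontr)
    assume isolated: "\<not> (\<exists>e\<in>D1. \<exists>e'\<in>D - D1. ends e \<inter> ends e' \<noteq> {})"
    have "deg D1 v \<noteq> 1" for v
    proof (cases "\<exists>e\<in>D1. v \<in> ends e")
      case True
      then have "{e\<in>D1. v \<in> ends e} = {e\<in>D. v \<in> ends e}" using isolated D1 by blast
      then show ?thesis using assms(1) unfolding deg_def leafless_def by metis
    next
      case False
      then show ?thesis unfolding deg_def by (metis (no_types, lifting) card.empty empty_Collect_eq zero_neq_one)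
    qed
    moreover have "D1 \<subset> D" "D1 \<noteq> {}" using D1 by auto
    ultimately show False using minimal[of D1] unfolding leafless_def by blast
  qed
qed

lemma minimal_leafless_is_cycle:
  assumes "D \<subseteq> E" "D \<noteq> {}" "leafless D"
    and minimal: "\<And>D'. D' \<subset> D \<Longrightarrow> D' \<noteq> {} \<Longrightarrow> \<not> leafless D'"
  shows "is_cycle E ends D"
proof -
  obtain e where "e \<in> D" using assms(2) by blast
  then have "card D \<le> card (verts D)"
    using minimal by (intro card_le_card_verts[OF assms(1)]) auto
  then have "deg D v = 0 \<or> deg D v = 2" for v
    using deg_0_or_2_if_leafless[OF assms(1,3)] by blast
  moreover have "edge_connected_set ends D"
    using edge_connected_if_minimal_leafless assms(3) minimal by blast
  ultimately show ?thesis unfolding is_cycle_def deg_def using assms(1,2) by blast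
qed

lemma leafless_contains_cycle:
  assumes "D \<subseteq> E" "D \<noteq> {}" "leafless D"
  obtains C where "C \<subseteq> D" "is_cycle E ends C"
proof -
  let ?P = "\<lambda>D'. D' \<subseteq> D \<and> D' \<noteq> {} \<and> leafless D'"
  obtain D' where D': "?P D'" and least: "\<And>D''. ?P D'' \<Longrightarrow> card D' \<le> card D''"
    using ex_has_least_nat[of ?P D card] assms by blast
  have "finite D'" using D' assms(1) finite_if_subset_edges by blast
  have "is_cycle E ends D'"
  proof (rule minimal_leafless_is_cycle)
    show "D' \<subseteq> E" "D' \<noteq> {}" "leafless D'" using D' assms(1) by auto
    show "\<not> leafless D''" if D'': "D'' \<subset> D'" "D'' \<noteq> {}" for D''
    proof
      assume "leafless D''"
      then have "card D' \<le> card D''" using least[of D''] D'' D' by blast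
      moreover have "card D'' < card D'" using psubset_card_mono[OF \<open>finite D'\<close> D''(1)] .
      ultimately show False by simp
    qed
  qed
  then show ?thesis using that D' by blast
qed

lemma cycle_leafless: "is_cycle E ends C \<Longrightarrow> leafless C"
  unfolding is_cycle_def leafless_def deg_def by (metis one_neq_zero numeral_One numeral_eq_iff semiring_norm(85))

lemma leaf_if_cycle_free:
  assumes "Z \<subseteq> E" "Z \<noteq> {}" "cycle_free Z"
  obtains w where "deg Z w = 1"
proof -
  have "\<not> leafless Z"
    using leafless_contains_cycle[OF assms(1,2)] assms(3) unfolding cycle_free_def by metis
  then show ?thesis using that unfolding leafless_def by blast
qed

subsection \<open>Greedy colouring of pendant edges\<close>

definition proper_coloring :: "('e \<Rightarrow> nat) \<Rightarrow> nat \<Rightarrow> 'e set \<Rightarrow> bool" where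
  "proper_coloring c k X \<longleftrightarrow> (\<forall>e\<in>X. c e < k) \<and>
     (\<forall>e\<in>X. \<forall>e'\<in>X. e \<noteq> e' \<and> ends e \<inter> ends e' \<noteq> {} \<longrightarrow> c e \<noteq> c e')"

lemma edge_colorable_iff: "edge_colorable ends k X \<longleftrightarrow> (\<exists>c. proper_coloring c k X)"
  unfolding edge_colorable_def proper_coloring_def by blast

lemma deg_le_if_edge_colorable:
  assumes "edge_colorable ends k X"
  shows "deg X v \<le> k"
proof -
  obtain c where c: "proper_coloring c k X" using assms edge_colorable_iff by blast
  let ?N = "{e\<in>X. v \<in> ends e}"
  have "inj_on c ?N" "c ` ?N \<subseteq> {0..<k}"
    using c unfolding proper_coloring_def inj_on_def by auto
  then have "card ?N \<le> card {0..<k}" by (intro card_inj_on_le) auto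
  then show ?thesis unfolding deg_def by simp
qed

text \<open>Greedy step: a pendant edge has at most \<open>k - 1\<close> neighbours, all at its other end.\<close>

lemma proper_coloring_extend_pendant:
  assumes "X \<subseteq> E" "e \<in> X" "w \<in> ends e" "deg X w = 1" "\<And>v. deg X v \<le> k"
    and c: "proper_coloring c k (X - {e})"
  obtains col where "proper_coloring (c(e := col)) k X"
proof -
  obtain z where z: "ends e = {w, z}" using other_end assms(1-3) by blast
  let ?N = "{e'\<in>X - {e}. z \<in> ends e'}"
  have "finite ?N" using assms(1) finite_if_subset_edges by auto
  moreover have "deg X z = card ?N + 1"
  proof -
    have "{e'\<in>X. z \<in> ends e'} = insert e ?N" using assms(2) z by blast
    then show ?thesis unfolding deg_def using \<open>finite ?N\<close> by simp
  qed
  ultimately have "card (c ` ?N) < card {0..<k}"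
    using assms(5)[of z] card_image_le[of ?N c] by simp
  then have "\<not> {0..<k} \<subseteq> c ` ?N"
    using \<open>finite ?N\<close> card_mono[of "c ` ?N" "{0..<k}"] by auto
  then obtain col where col: "col < k" "col \<notin> c ` ?N"
    by (meson atLeastLessThan_iff subsetI zero_le)
  obtain e1 where "e1 \<in> X" "\<And>e'. e' \<in> X \<Longrightarrow> w \<in> ends e' \<Longrightarrow> e' = e1"
    using deg_eq_1E[OF assms(4)] by metis
  then have w_only_e: "e' \<in> X - {e} \<Longrightarrow> w \<notin> ends e'" for e'
    using assms(2,3) by blast
  have col_free: "c e' \<noteq> col" if "e' \<in> X - {e}" "ends e \<inter> ends e' \<noteq> {}" for e'
  proof -
    have "z \<in> ends e'" using that w_only_e[OF that(1)] z by auto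
    then have "e' \<in> ?N" using that(1) by blast
    then show ?thesis using col(2) by blast
  qed
  have "proper_coloring (c(e := col)) k X"
    unfolding proper_coloring_def
  proof (intro conjI ballI impI)
    show "(c(e := col)) x < k" if "x \<in> X" for x
      using that c col(1) unfolding proper_coloring_def by auto
    show "(c(e := col)) x \<noteq> (c(e := col)) y"
      if "x \<in> X" "y \<in> X" "x \<noteq> y \<and> ends x \<inter> ends y \<noteq> {}" for x y
      using that c col_free[of x] col_free[of y] unfolding proper_coloring_def
      by (cases "x = e"; cases "y = e") (auto simp: inf_commute)
  qed
  then show ?thesis by (rule that)
qed

lemma pendant_edge_outside_leafless:
  assumes "Z \<subseteq> E" "Y \<subseteq> Z" "leafless Y" "deg Z w = 1"
  obtains e where "e \<in> Z - Y" "w \<in> ends e"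
proof -
  obtain e where e: "e \<in> Z" "w \<in> ends e" using deg_eq_1E[OF assms(4)] by metis
  have "e \<notin> Y"
  proof
    assume "e \<in> Y"
    then have "1 \<le> deg Y w" using deg_ge_1 assms(1,2) e(2) by blast
    moreover have "deg Y w \<le> 1" using deg_mono[OF assms(1,2)] assms(4) by metis
    ultimately show False using assms(3) unfolding leafless_def by simp
  qed
  then show ?thesis using that e by blast
qed

lemma edge_colorable_extend_by_pendants:
  assumes "X \<subseteq> E" "Y \<subseteq> X" "leafless Y" "\<And>v. deg X v \<le> k" "proper_coloring c k Y"
    and no_leafless: "\<And>Z. Y \<subset> Z \<Longrightarrow> Z \<subseteq> X \<Longrightarrow> \<not> leafless Z"
  shows "edge_colorable ends k X"
  using assms
proof (induction "card (X - Y)" arbitrary: X rule: less_induct)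
  case less
  show ?case
  proof (cases "X = Y")
    case True
    then show ?thesis using less.prems(5) edge_colorable_iff by blast
  next
    case False
    then have "Y \<subset> X" using less.prems(2) by blast
    then obtain w where w: "deg X w = 1"
      using less.prems(6)[of X] unfolding leafless_def by blast
    obtain e where e: "e \<in> X - Y" "w \<in> ends e"
      using pendant_edge_outside_leafless[OF less.prems(1,2,3) w] by metis
    have "edge_colorable ends k (X - {e})"
    proof (rule less.hyps)
      have "X - {e} - Y = (X - Y) - {e}" by blast
      moreover have "finite (X - Y)" using less.prems(1) finite_if_subset_edges by blast
      ultimately show "card (X - {e} - Y) < card (X - Y)"
        using e(1) card_Diff1_less by metis
      show "X - {e} \<subseteq> E" "Y \<subseteq> X - {e}" using less.prems(1,2) e(1) by auto
      show "deg (X - {e}) v \<le> k" for v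
        using deg_mono[OF less.prems(1), of "X - {e}" v] less.prems(4)[of v] by auto
      show "\<not> leafless Z" if "Y \<subset> Z" "Z \<subseteq> X - {e}" for Z
        using less.prems(6) that by blast
      show "leafless Y" "proper_coloring c k Y" using less.prems(3,5) by auto
    qed
    then obtain c' where c': "proper_coloring c' k (X - {e})" using edge_colorable_iff by blast
    have "e \<in> X" using e(1) by blast
    obtain col where "proper_coloring (c'(e := col)) k X"
      using proper_coloring_extend_pendant[OF less.prems(1) \<open>e \<in> X\<close> e(2) w less.prems(4) c'] by metis
    then show ?thesis using edge_colorable_iff by blast
  qed
qed

subsection \<open>Balanced splitting of forests\<close>

definition balanced :: "'e set \<Rightarrow> 'e set \<Rightarrow> bool" where
  "balanced T A \<longleftrightarrow> A \<subseteq> T \<and> (\<forall>v. 2 * deg A v \<le> deg T v + 1 \<and> 2 * deg (T - A) v \<le> deg T v + 1)"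

lemma balanced_Diff: "balanced T A \<Longrightarrow> balanced T (T - A)"
  unfolding balanced_def by (simp add: double_diff)

lemma balanced_insert_pendant:
  assumes "T \<subseteq> E" "e \<in> T" "ends e = {w, z}" "w \<noteq> z" "deg T w = 1"
    and bal: "balanced (T - {e}) A" and lighter: "deg A z \<le> deg (T - {e} - A) z"
  shows "balanced T (insert e A)"
proof -
  let ?T' = "T - {e}" and ?B = "T - {e} - A"
  have T': "?T' \<subseteq> E" using assms(1) by blast
  have A: "A \<subseteq> ?T'" "A \<subseteq> E" using bal assms(1) unfolding balanced_def by auto
  have deg_T: "deg T v = deg ?T' v + (if v \<in> ends e then 1 else 0)" for v
    using deg_insert[OF T', of e v] assms(2) by (simp add: insert_absorb)
  have deg_T': "deg ?T' v = deg A v + deg ?B v" for v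
    using deg_split[OF T' A(1)] .
  have deg_insert_A: "deg (insert e A) v = deg A v + (if v \<in> ends e then 1 else 0)" for v
    using deg_insert[OF A(2), of e v] A(1) by blast
  have "deg ?T' w = 0" using deg_T[of w] assms(3,5) by simp
  have "2 * deg (insert e A) v \<le> deg T v + 1 \<and> 2 * deg (T - insert e A) v \<le> deg T v + 1" for v
  proof -
    have "T - insert e A = ?B" by blast
    moreover have "2 * deg A v \<le> deg ?T' v + 1" "2 * deg ?B v \<le> deg ?T' v + 1"
      using bal unfolding balanced_def by auto
    moreover have "v \<in> ends e \<longleftrightarrow> v = w \<or> v = z" using assms(3) by blast
    ultimately show ?thesis
      using deg_T[of v] deg_T'[of v] deg_insert_A[of v] \<open>deg ?T' w = 0\<close> deg_T'[of w] lighter assms(4)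
      by auto
  qed
  then show ?thesis using A assms(2) unfolding balanced_def by auto
qed

lemma cycle_free_balanced:
  assumes "T \<subseteq> E" "cycle_free T"
  obtains A where "balanced T A"
  using assms
proof (induction "card T" arbitrary: T thesis rule: less_induct)
  case less
  show ?case
  proof (cases "T = {}")
    case True
    then show ?thesis using less.prems(1)[of "{}"] unfolding balanced_def deg_def by simp
  next
    case False
    obtain w where w: "deg T w = 1" using leaf_if_cycle_free[OF less.prems(2) False less.prems(3)] .
    obtain e where e: "e \<in> T" "w \<in> ends e" using deg_eq_1E[OF w] by metis
    obtain z where z: "ends e = {w, z}" "w \<noteq> z" using other_end e less.prems(2) by (metis subsetD)
    have "cycle_free (T - {e})" using less.prems(3) unfolding cycle_free_def by blast
    then obtain A where A: "balanced (T - {e}) A"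
      using less.hyps[of "T - {e}"] less.prems(2) e(1) finite_if_subset_edges card_Diff1_less
      by (metis Diff_subset subset_trans)
    show ?thesis
    proof (cases "deg A z \<le> deg (T - {e} - A) z")
      case True
      then show ?thesis
        using balanced_insert_pendant[OF less.prems(2) e(1) z(1,2) w A] less.prems(1) by blast
    next
      case False
      have "balanced (T - {e}) (T - {e} - A)" using balanced_Diff[OF A] .
      moreover have "T - {e} - (T - {e} - A) = A" using A unfolding balanced_def by blast
      ultimately show ?thesis
        using balanced_insert_pendant[OF less.prems(2) e(1) z(1,2) w] False less.prems(1) by force
    qed
  qed
qed

lemma cycle_free_large_half:
  assumes "T \<subseteq> E" "cycle_free T"
  obtains P where "P \<subseteq> T" "card T \<le> 2 * card P" "\<And>v. 2 * deg P v \<le> deg T v + 1"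
proof -
  obtain A where A: "balanced T A" using cycle_free_balanced[OF assms] .
  have "finite T" using assms(1) finite_if_subset_edges by blast
  then have "card T = card A + card (T - A)"
    using A unfolding balanced_def by (metis card_Diff_subset card_mono le_add_diff_inverse finite_subset)
  then show ?thesis
    using that[of A] that[of "T - A"] A balanced_Diff[OF A] unfolding balanced_def
    by (cases "card (T - A) \<le> card A") auto
qed

lemma nu_attained:
  obtains F where "F \<subseteq> E" "edge_colorable ends k F" "card F = nu E ends k"
proof -
  let ?S = "{card F | F. F \<subseteq> E \<and> edge_colorable ends k F}"
  have "?S \<subseteq> card ` Pow E" by blast
  then have "finite ?S" using finite_edges finite_subset by blast
  moreover have "edge_colorable ends k {}" unfolding edge_colorable_def by simp
  then have "0 \<in> ?S" by (metis (mono_tags, lifting) card.empty empty_subsetI mem_Collect_eq)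
  ultimately have "nu E ends k \<in> ?S" unfolding nu_def by (intro Max_in) auto
  then show ?thesis using that by auto
qed

lemma card_le_nu:
  assumes "S \<subseteq> E" "edge_colorable ends k S"
  shows "card S \<le> nu E ends k"
proof -
  let ?S = "{card F | F. F \<subseteq> E \<and> edge_colorable ends k F}"
  have "?S \<subseteq> card ` Pow E" by blast
  then have "finite ?S" using finite_edges finite_subset by blast
  then show ?thesis unfolding nu_def using assms by (intro Max_ge) auto
qed

end

locale multigraph_at_most_one_cycle = finite_multigraph +
  assumes at_most_one_cycle: "at_most_one_cycle E ends"
begin

lemma cycle_unique: "is_cycle E ends C1 \<Longrightarrow> is_cycle E ends C2 \<Longrightarrow> C1 = C2"
  using at_most_one_cycle unfolding at_most_one_cycle_def by blast

lemma leafless_is_cycle: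
  assumes "Z \<subseteq> E" "Z \<noteq> {}" "leafless Z"
  shows "is_cycle E ends Z"
proof -
  obtain C where C: "C \<subseteq> Z" "is_cycle E ends C" using leafless_contains_cycle[OF assms] .
  obtain e0 where e0: "e0 \<in> C" using C(2) unfolding is_cycle_def by blast
  have CE: "C \<subseteq> E" using C(1) assms(1) by blast
  have no_cycle: "\<not> leafless W" if W: "W \<subseteq> Z - D" "W \<noteq> {}" "D \<inter> C \<noteq> {}" for W D
  proof
    assume "leafless W"
    moreover have "W \<subseteq> E" using W(1) assms(1) by blast
    ultimately obtain C' where "C' \<subseteq> W" "is_cycle E ends C'"
      using leafless_contains_cycle W(2) by metis
    then show False using cycle_unique[OF C(2)] W(1,3) by blast
  qed
  have "card Z \<le> card (verts Z)"
    using no_cycle[of _ "{e0}"] e0 C(1) by (intro card_le_card_verts[OF assms(1)]) auto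
  then have deg_Z: "deg Z v = 0 \<or> deg Z v = 2" for v
    using deg_0_or_2_if_leafless[OF assms(1,3)] by blast
  have deg_C: "deg C v = 0 \<or> deg C v = 2" for v
    using C(2) unfolding is_cycle_def deg_def by blast
  have "deg (Z - C) v \<noteq> 1" for v
    using deg_Z[of v] deg_C[of v] deg_split[OF assms(1) C(1), of v] by presburger
  then have "leafless (Z - C)" unfolding leafless_def by blast
  then have "Z - C = {}" using no_cycle[of "Z - C" C] e0 by blast
  then show ?thesis using C by (metis Diff_eq_empty_iff subset_antisym)
qed

lemma edge_colorable_if_deg_le:
  assumes "X \<subseteq> E" "\<And>v. deg X v \<le> k"
    and cycles: "\<And>C. C \<subseteq> X \<Longrightarrow> is_cycle E ends C \<Longrightarrow> edge_colorable ends k C"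
  shows "edge_colorable ends k X"
proof -
  obtain Y where Y: "Y \<subseteq> X" "leafless Y" "edge_colorable ends k Y"
    and maximal: "\<And>Z. Y \<subset> Z \<Longrightarrow> Z \<subseteq> X \<Longrightarrow> \<not> leafless Z"
  proof (cases "cycle_free X")
    case True
    show ?thesis
    proof (rule that[of "{}"])
      show "leafless {}" "edge_colorable ends k {}"
        unfolding leafless_def deg_def edge_colorable_def by simp_all
      show "\<not> leafless Z" if Z: "{} \<subset> Z" "Z \<subseteq> X" for Z
      proof
        assume "leafless Z"
        moreover have "Z \<subseteq> E" "Z \<noteq> {}" using Z assms(1) by auto
        ultimately obtain C where "C \<subseteq> Z" "is_cycle E ends C"
          using leafless_contains_cycle by metis
        then show False using True Z(2) unfolding cycle_free_def by blast
      qed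
    qed simp
  next
    case False
    then obtain C where C: "C \<subseteq> X" "is_cycle E ends C" unfolding cycle_free_def by blast
    show ?thesis
    proof (rule that[OF C(1) cycle_leafless[OF C(2)] cycles[OF C]])
      show "\<not> leafless Z" if Z: "C \<subset> Z" "Z \<subseteq> X" for Z
      proof
        assume "leafless Z"
        moreover have "Z \<subseteq> E" "Z \<noteq> {}" using Z assms(1) by auto
        ultimately have "is_cycle E ends Z" using leafless_is_cycle by blast
        then show False using cycle_unique[OF C(2)] Z(1) by blast
      qed
    qed
  qed
  obtain c where "proper_coloring c k Y" using Y(3) edge_colorable_iff by blast
  then show ?thesis
    using edge_colorable_extend_by_pendants[OF assms(1) Y(1,2) assms(2)] maximal by blast
qed

lemma cycle_free_part:
  assumes "T \<subseteq> E"
  obtains T0 where "T0 \<subseteq> T" "card T \<le> card T0 + 1"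
    "\<And>C. C \<subseteq> I \<union> T0 \<Longrightarrow> is_cycle E ends C \<Longrightarrow> C \<subseteq> I"
proof (cases "\<exists>C. C \<subseteq> I \<union> T \<and> is_cycle E ends C \<and> \<not> C \<subseteq> I")
  case True
  then obtain C e0 where C: "is_cycle E ends C" "e0 \<in> C" "e0 \<notin> I" "e0 \<in> T"
    by blast
  show ?thesis
  proof (rule that)
    show "T - {e0} \<subseteq> T" by blast
    show "card T \<le> card (T - {e0}) + 1"
      using card_Suc_Diff1[OF finite_if_subset_edges[OF assms] C(4)] by simp
    show "C' \<subseteq> I" if "C' \<subseteq> I \<union> (T - {e0})" "is_cycle E ends C'" for C'
      using cycle_unique[OF C(1) that(2)] that(1) C(2,3) by blast
  qed
next
  case False
  show ?thesis
  proof (rule that[of T])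
    show "C \<subseteq> I" if "C \<subseteq> I \<union> T" "is_cycle E ends C" for C
      using False that by blast
  qed simp_all
qed

lemma colorable_subgraph_of_union:
  assumes "I \<subseteq> E" "T \<subseteq> E" "I \<inter> T = {}" "edge_colorable ends k I"
    and deg_bound: "\<And>v. 2 * deg I v + deg T v \<le> 2 * k"
  obtains S where "S \<subseteq> E" "edge_colorable ends k S" "card I + card T div 2 \<le> card S"
proof -
  obtain T0 where T0: "T0 \<subseteq> T" "card T \<le> card T0 + 1"
    and cycles_in_I: "\<And>C. C \<subseteq> I \<union> T0 \<Longrightarrow> is_cycle E ends C \<Longrightarrow> C \<subseteq> I"
    using cycle_free_part[OF assms(2)] by blast
  have T0E: "T0 \<subseteq> E" using T0(1) assms(2) by blast
  have "cycle_free T0"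
    unfolding cycle_free_def
  proof
    assume "\<exists>C. C \<subseteq> T0 \<and> is_cycle E ends C"
    then obtain C where "C \<subseteq> T0" "is_cycle E ends C" by blast
    moreover from this have "C \<subseteq> I" using cycles_in_I by blast
    ultimately show False using T0(1) assms(3) unfolding is_cycle_def by blast
  qed
  then obtain P where P: "P \<subseteq> T0" "card T0 \<le> 2 * card P" "\<And>v. 2 * deg P v \<le> deg T0 v + 1"
    using cycle_free_large_half[OF T0E] by blast
  have PE: "P \<subseteq> E" and IP: "I \<inter> P = {}" using P(1) T0(1) assms(2,3) by auto
  have IPE: "I \<union> P \<subseteq> E" using assms(1) PE by blast
  have deg_IP: "deg (I \<union> P) v \<le> k" for v
  proof -
    have "deg T0 v \<le> deg T v" using deg_mono[OF assms(2) T0(1)] .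
    then show ?thesis
      using deg_Un_disjoint[OF assms(1) PE IP] P(3)[of v] deg_bound[of v] by presburger
  qed
  have cycles_IP: "edge_colorable ends k C" if "C \<subseteq> I \<union> P" "is_cycle E ends C" for C
  proof -
    have "C \<subseteq> I" using cycles_in_I[of C] that P(1) by blast
    then show ?thesis using edge_colorable_mono[OF assms(4)] by blast
  qed
  have "edge_colorable ends k (I \<union> P)"
    by (rule edge_colorable_if_deg_le[OF IPE deg_IP cycles_IP])
  moreover have "card (I \<union> P) = card I + card P"
    using assms(1) PE IP finite_if_subset_edges by (simp add: card_Un_disjoint)
  moreover have "card T div 2 \<le> card P" using T0(2) P(2) by linarith
  ultimately show ?thesis using that[OF IPE] by simp
qed

lemma nu_ge_average:
  assumes "k \<ge> 1"
  shows "(nu E ends (k - 1) + nu E ends (k + 1)) div 2 \<le> nu E ends k"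
proof -
  obtain F where F: "F \<subseteq> E" "edge_colorable ends (k - 1) F" "card F = nu E ends (k - 1)"
    by (rule nu_attained)
  obtain H where H: "H \<subseteq> E" "edge_colorable ends (k + 1) H" "card H = nu E ends (k + 1)"
    by (rule nu_attained)
  have col: "edge_colorable ends k (F \<inter> H)" using edge_colorable_mono[OF F(2)] by simp
  have deg: "2 * deg (F \<inter> H) v + deg (sym_diff F H) v \<le> 2 * k" for v
    using deg_add_eq_deg_Int_symdiff[OF F(1) H(1), of v] assms
      deg_le_if_edge_colorable[OF F(2), of v] deg_le_if_edge_colorable[OF H(2), of v] by linarith
  have sub: "F \<inter> H \<subseteq> E" "sym_diff F H \<subseteq> E" "(F \<inter> H) \<inter> sym_diff F H = {}"
    using F(1) H(1) by auto
  obtain S where S: "S \<subseteq> E" "edge_colorable ends k S"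
    "card (F \<inter> H) + card (sym_diff F H) div 2 \<le> card S"
    by (rule colorable_subgraph_of_union[OF sub col deg])
  have "card F + card H = 2 * card (F \<inter> H) + card (sym_diff F H)"
    using card_add_eq_card_Int_symdiff[OF finite_if_subset_edges[OF F(1)] finite_if_subset_edges[OF H(1)]] .
  then show ?thesis using S card_le_nu[OF S(1,2)] F(3) H(3) by linarith
qed

end

theorem theorem13:
  fixes V :: "'v set" and E :: "'e set" and ends :: "'e \<Rightarrow> 'v set" and k :: nat
  assumes "multigraph V E ends"
    and "at_most_one_cycle E ends"
    and "k \<ge> 2"
  shows "nu E ends k \<ge> (nu E ends (k - 1) + nu E ends (k + 1)) div 2"
proof -
  interpret multigraph_at_most_one_cycle V E ends
    using assms(1,2) by unfold_locales
  show ?thesis using nu_ge_average assms(3) by simp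
qed

end
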